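(* Let $f:[0,\infty)\to\mathbb R$ be convex and non-increasing, and let $g:[0,\infty)\to\mathbb R\cup\{+\infty\}$ be convex and non-increasing. Define $w(x,y)=g\big(\sqrt{(x-y)^2+(f(x)-f(y))^2}\big)$ for $x,y\ge0$. Then for all $0\le x_1\le x_2\le x_3\le x_4$, $w(x_1,x_3)+w(x_2,x_4)=\min\{w(x_{\sigma(1)},x_{\sigma(2)})+w(x_{\sigma(3)},x_{\sigma(4)}):\sigma\text{ a permutation of }\{1,2,3,4\}\},$ i.e. $w$ is well-ordering on $[0,\infty)$.
   Context: Well-ordering on a set $J\subset\mathbb R$ means exactly the displayed identity for all $x_1\le x_2\le x_3\le x_4$ in $J$ (for a symmetric continuous interaction). *)

theory Defs
  imports "HOL-Analysis.Analysis" "HOL-Library.Extended_Real" "HOL-Combinatorics.Permutations"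
begin

definition ext_convex_on :: "real set \<Rightarrow> (real \<Rightarrow> ereal) \<Rightarrow> bool" where
  "ext_convex_on S g \<longleftrightarrow>
     (\<forall>x\<in>S. \<forall>y\<in>S. \<forall>u::real. 0 < u \<and> u < 1 \<longrightarrow>
        g ((1 - u) * x + u * y) \<le> ereal (1 - u) * g x + ereal u * g y)"

definition wfun :: "(real \<Rightarrow> real) \<Rightarrow> (real \<Rightarrow> ereal) \<Rightarrow> real \<Rightarrow> real \<Rightarrow> ereal" where
  "wfun f g x y = g (sqrt ((x - y)^2 + (f x - f y)^2))"

end

theory Submission
  imports Defs
begin

text \<open>
  Write \<open>d(x, y)\<close> for the distance between the graph points \<open>(x, f x)\<close> and \<open>(y, f y)\<close>.
  For \<open>x\<^sub>1 \<le> x\<^sub>2 \<le> x\<^sub>3 \<le> x\<^sub>4\<close> the chords of the monotone graph are nested, so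
  \<open>d\<^sub>1\<^sub>2, d\<^sub>2\<^sub>3 \<le> d\<^sub>1\<^sub>3 \<le> d\<^sub>1\<^sub>4\<close> and \<open>d\<^sub>3\<^sub>4 \<le> d\<^sub>2\<^sub>4\<close>. Since \<open>f\<close> is convex and non-increasing, the
  three edge vectors \<open>e\<^sub>1, e\<^sub>2, e\<^sub>3\<close> of the polygon through the four graph points lie in one
  quadrant and turn monotonically; then \<open>e\<^sub>2\<close> is a combination of \<open>e\<^sub>1 + e\<^sub>2\<close> and
  \<open>e\<^sub>2 + e\<^sub>3\<close> with coefficients in \<open>[0, 1]\<close>, and the triangle inequality yields the quadrangle inequality
  \<open>d\<^sub>1\<^sub>4 + d\<^sub>2\<^sub>3 \<le> d\<^sub>1\<^sub>3 + d\<^sub>2\<^sub>4\<close>. With \<open>w\<^sub>i\<^sub>j = g(d\<^sub>i\<^sub>j)\<close> and \<open>g\<close> non-increasing, nestedness gives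
  \<open>w\<^sub>1\<^sub>3 + w\<^sub>2\<^sub>4 \<le> w\<^sub>1\<^sub>2 + w\<^sub>3\<^sub>4\<close>; as \<open>g\<close> is moreover convex, the quadrangle inequality
  gives \<open>w\<^sub>1\<^sub>3 + w\<^sub>2\<^sub>4 \<le> w\<^sub>1\<^sub>4 + w\<^sub>2\<^sub>3\<close>. Every pairing of the four points is one of these three.
\<close>

lemma convex_on_chord_slopes_le3:
  fixes f :: "real \<Rightarrow> real"
  assumes f: "convex_on {p..r} f" and "p \<le> q" "q \<le> r"
  shows "(q - p) * (f q - f r) \<le> (r - q) * (f p - f q)"
proof (cases "p = r")
  case True
  with assms show ?thesis
    by simp
next
  case False
  then have "0 < r - p"
    using assms by simp
  have "f q \<le> (f r - f p) / (r - p) * (q - p) + f p"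
    using convex_onD_Icc'[OF f] assms by simp
  then have "(r - p) * f q \<le> (f r - f p) * (q - p) + (r - p) * f p"
    using \<open>0 < r - p\<close> by (simp add: field_simps)
  then show ?thesis
    by (simp add: algebra_simps)
qed

lemma convex_on_chord_slopes_le:
  fixes f :: "real \<Rightarrow> real"
  assumes f: "convex_on {p..s} f" and "p \<le> q" "q \<le> r" "r \<le> s"
  shows "(q - p) * (f r - f s) \<le> (s - r) * (f p - f q)"
proof -
  have slopes3: "(j - i) * (f j - f k) \<le> (k - j) * (f i - f j)"
    if "p \<le> i" "i \<le> j" "j \<le> k" "k \<le> s" for i j k
    using that by (intro convex_on_chord_slopes_le3 convex_on_subset[OF f]) auto
  show ?thesis
  proof (cases "q = r")
    case True
    then show ?thesis
      using slopes3[of p q s] assms by simp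
  next
    case False
    then have "0 < r - q"
      using assms by simp
    have "(r - q) * ((q - p) * (f r - f s)) \<le> (q - p) * ((s - r) * (f q - f r))"
      using mult_left_mono[OF slopes3[of q r s], of "q - p"] assms by (simp add: mult_ac)
    also have "\<dots> \<le> (s - r) * ((r - q) * (f p - f q))"
      using mult_left_mono[OF slopes3[of p q r], of "s - r"] assms by (simp add: mult_ac)
    finally show ?thesis
      using \<open>0 < r - q\<close> by (simp add: mult.left_commute)
  qed
qed

lemma ext_convex_on_add_le_endpoints:
  fixes g :: "real \<Rightarrow> ereal"
  assumes g_vals: "\<And>t. 0 \<le> t \<Longrightarrow> g t \<noteq> -\<infinity>" and g: "ext_convex_on {0..} g"
    and "0 \<le> a" "a \<le> b" "b \<le> d"
  shows "g b + g (a + d - b) \<le> g a + g d"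
proof (cases "a < b \<and> b < d")
  case True
  define u where "u = (b - a) / (d - a)"
  have u: "0 < u" "u < 1"
    using True by (auto simp: u_def field_simps)
  have conv: "g ((1 - v) * a + v * d) \<le> ereal (1 - v) * g a + ereal v * g d"
    if "0 < v" "v < 1" for v
    using g assms that unfolding ext_convex_on_def by auto
  have "u * (d - a) = b - a"
    using True by (simp add: u_def)
  then have "(1 - u) * a + u * d = b" "(1 - (1 - u)) * a + (1 - u) * d = a + d - b"
    by (simp_all add: algebra_simps)
  then have "g b \<le> ereal (1 - u) * g a + ereal u * g d"
    "g (a + d - b) \<le> ereal u * g a + ereal (1 - u) * g d"
    using conv[of u] conv[of "1 - u"] u by simp_all
  then have "g b + g (a + d - b) \<le>
      (ereal (1 - u) * g a + ereal u * g d) + (ereal u * g a + ereal (1 - u) * g d)"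
    by (rule add_mono)
  also have "\<dots> = g a + g d"
    using g_vals[of a] g_vals[of d] assms u
    by (cases "g a"; cases "g d") (auto simp: algebra_simps)
  finally show ?thesis .
next
  case False
  then have "b = a \<or> b = d"
    using assms by auto
  then show ?thesis
    by (auto simp: add.commute)
qed

lemma antimono_ext_convex_on_add_le:
  fixes g :: "real \<Rightarrow> ereal"
  assumes g_vals: "\<And>t. 0 \<le> t \<Longrightarrow> g t \<noteq> -\<infinity>" and g_convex: "ext_convex_on {0..} g"
    and g_noninc: "\<And>s t. 0 \<le> s \<Longrightarrow> s \<le> t \<Longrightarrow> g t \<le> g s"
    and "0 \<le> a" "a \<le> b" "b \<le> d" "a + d \<le> b + c"
  shows "g b + g c \<le> g a + g d"
proof -
  have "g b + g c \<le> g b + g (a + d - b)"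
    using g_noninc assms by (intro add_left_mono) simp
  also have "\<dots> \<le> g a + g d"
    using ext_convex_on_add_le_endpoints[OF g_vals g_convex] assms by simp
  finally show ?thesis .
qed

lemma norm_add_eq_if_cross_eq_0:
  fixes z w :: complex
  assumes "Re z * Im w = Im z * Re w" "0 \<le> z \<bullet> w"
  shows "norm (z + w) = norm z + norm w"
proof -
  have "(z \<bullet> w)\<^sup>2 + (Re z * Im w - Im z * Re w)\<^sup>2 = (norm z * norm w)\<^sup>2"
    unfolding power_mult_distrib cmod_power2
    by (simp add: inner_complex_def power2_eq_square algebra_simps)
  then have "z \<bullet> w = norm z * norm w"
    using assms by simp
  then show ?thesis
    by (simp add: norm_triangle_eq norm_cauchy_schwarz_eq)
qed

lemma norm_add_diff_add_norm_le:
  fixes U W v :: "'a::real_normed_vector"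
  assumes v: "v = a *\<^sub>R U + b *\<^sub>R W" and "0 \<le> a" "a \<le> 1" "0 \<le> b" "b \<le> 1"
  shows "norm (U + W - v) + norm v \<le> norm U + norm W"
proof -
  have "U + W - v = (1 - a) *\<^sub>R U + (1 - b) *\<^sub>R W"
    by (simp add: v algebra_simps)
  then have "norm (U + W - v) \<le> (1 - a) * norm U + (1 - b) * norm W"
    using assms norm_triangle_ineq[of "(1 - a) *\<^sub>R U" "(1 - b) *\<^sub>R W"] by simp
  moreover have "norm v \<le> a * norm U + b * norm W"
    using assms norm_triangle_ineq[of "a *\<^sub>R U" "b *\<^sub>R W"] by simp
  ultimately show ?thesis
    by (simp add: algebra_simps)
qed

lemma norm_add3_add_norm_le:
  fixes u v w :: complex
  assumes nonneg: "0 \<le> Re u" "0 \<le> Im u" "0 \<le> Re v" "0 \<le> Im v" "0 \<le> Re w" "0 \<le> Im w"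
    and turn: "Re u * Im v \<le> Re v * Im u" "Re v * Im w \<le> Re w * Im v" "Re u * Im w \<le> Re w * Im u"
  shows "norm (u + v + w) + norm v \<le> norm (u + v) + norm (v + w)"
proof -
  define C12 where "C12 = Re v * Im u - Re u * Im v"
  define C13 where "C13 = Re w * Im u - Re u * Im w"
  define C23 where "C23 = Re w * Im v - Re v * Im w"
  define K where "K = C12 + C13 + C23"
  have C: "0 \<le> C12" "0 \<le> C13" "0 \<le> C23"
    using turn by (simp_all add: C12_def C13_def C23_def)
  show ?thesis
  proof (cases "K = 0")
    case True
    then have cross_0: "C12 = 0" "C13 = 0" "C23 = 0"
      using C by (simp_all add: K_def)
    have "norm (u + v) = norm u + norm v" "norm (v + w) = norm v + norm w"
      "norm ((u + v) + w) = norm (u + v) + norm w"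
      by (intro norm_add_eq_if_cross_eq_0; use nonneg cross_0 in
          \<open>simp add: C12_def C13_def C23_def inner_complex_def algebra_simps\<close>)+
    then show ?thesis
      by simp
  next
    case False
    then have "0 < K"
      using C by (simp add: K_def)
    txt \<open>The cross products express the linear relation \<open>C13 v = C23 u + C12 w\<close>
      between three plane vectors.\<close>
    have "v = inverse K *\<^sub>R (K *\<^sub>R v)"
      using \<open>0 < K\<close> by simp
    also have "K *\<^sub>R v = C23 *\<^sub>R (u + v) + C12 *\<^sub>R (v + w)"
      by (simp add: complex_eq_iff K_def C12_def C13_def C23_def algebra_simps)
    finally have "v = (C23 / K) *\<^sub>R (u + v) + (C12 / K) *\<^sub>R (v + w)"
      by (simp add: scaleR_add_right divide_inverse_commute)
    from norm_add_diff_add_norm_le[OF this] C \<open>0 < K\<close>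
    show ?thesis
      by (simp add: K_def algebra_simps)
  qed
qed

definition graph_dist :: "(real \<Rightarrow> real) \<Rightarrow> real \<Rightarrow> real \<Rightarrow> real" where
  "graph_dist f a b = dist (Complex a (f a)) (Complex b (f b))"

lemma wfun_eq_graph_dist: "wfun f g a b = g (graph_dist f a b)"
  by (simp add: wfun_def graph_dist_def dist_norm cmod_def)

lemma wfun_commute: "wfun f g a b = wfun f g b a"
  by (simp add: wfun_eq_graph_dist graph_dist_def dist_commute)

lemma graph_dist_eq_cmod: "graph_dist f a b = cmod (Complex (b - a) (f a - f b))"
  by (simp add: graph_dist_def dist_norm cmod_def power2_commute)

lemma graph_dist_mono:
  assumes f_noninc: "\<And>s t. 0 \<le> s \<Longrightarrow> s \<le> t \<Longrightarrow> f t \<le> f s"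
    and "0 \<le> a" "a \<le> b" "b \<le> c" "c \<le> d"
  shows "graph_dist f b c \<le> graph_dist f a d"
proof -
  have f_le: "f d \<le> f c" "f c \<le> f b" "f b \<le> f a"
    using f_noninc assms by (meson order.trans)+
  show ?thesis
    unfolding graph_dist_eq_cmod cmod_def
    by (intro real_sqrt_le_mono add_mono power_mono) (use assms(2-) f_le in simp_all)
qed

lemma graph_dist_quadrangle:
  assumes f_convex: "convex_on {0..} f"
    and f_noninc: "\<And>s t. 0 \<le> s \<Longrightarrow> s \<le> t \<Longrightarrow> f t \<le> f s"
    and "0 \<le> a" "a \<le> b" "b \<le> c" "c \<le> d"
  shows "graph_dist f a d + graph_dist f b c \<le> graph_dist f a c + graph_dist f b d"
proof -
  define u v w where "u = Complex (b - a) (f a - f b)" and "v = Complex (c - b) (f b - f c)"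
    and "w = Complex (d - c) (f c - f d)"
  have f_le: "f d \<le> f c" "f c \<le> f b" "f b \<le> f a"
    using f_noninc assms by (meson order.trans)+
  have slopes: "(q - p) * (f r - f s) \<le> (s - r) * (f p - f q)"
    if "0 \<le> p" "p \<le> q" "q \<le> r" "r \<le> s" for p q r s
    using that by (intro convex_on_chord_slopes_le convex_on_subset[OF f_convex]) auto
  have "norm (u + v + w) + norm v \<le> norm (u + v) + norm (v + w)"
    unfolding u_def v_def w_def
    by (intro norm_add3_add_norm_le)
      (use assms(3-) f_le slopes[of a b b c] slopes[of b c c d] slopes[of a b c d] in simp_all)
  moreover have "u + v + w = Complex (d - a) (f a - f d)" "u + v = Complex (c - a) (f a - f c)"
    "v + w = Complex (d - b) (f b - f d)"
    by (simp_all add: u_def v_def w_def complex_eq_iff)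
  ultimately show ?thesis
    by (simp add: graph_dist_eq_cmod v_def)
qed

lemma pairing_sum_cases:
  fixes W :: "nat \<Rightarrow> nat \<Rightarrow> 'a::ab_semigroup_add"
  assumes sym: "\<And>i j. W i j = W j i" and \<sigma>: "\<sigma> permutes {1..4}"
  shows "W (\<sigma> 1) (\<sigma> 2) + W (\<sigma> 3) (\<sigma> 4) \<in> {W 1 2 + W 3 4, W 1 3 + W 2 4, W 1 4 + W 2 3}"
proof -
  have range: "\<sigma> i \<in> {1, 2, 3, 4}" if "i \<in> {1..4}" for i
    using permutes_in_image[OF \<sigma>, of i] that by auto
  have "\<sigma> 1 \<noteq> \<sigma> 2" "\<sigma> 1 \<noteq> \<sigma> 3" "\<sigma> 1 \<noteq> \<sigma> 4"
    "\<sigma> 2 \<noteq> \<sigma> 3" "\<sigma> 2 \<noteq> \<sigma> 4" "\<sigma> 3 \<noteq> \<sigma> 4"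
    using permutes_inj[OF \<sigma>] by (simp_all add: inj_eq)
  with range[of 1] range[of 2] range[of 3] range[of 4] show ?thesis
    by (auto simp: sym add.commute)
qed

lemma Min_pairings_eq:
  fixes W :: "nat \<Rightarrow> nat \<Rightarrow> 'a::{linorder, ab_semigroup_add}"
  assumes sym: "\<And>i j. W i j = W j i"
    and "W 1 3 + W 2 4 \<le> W 1 2 + W 3 4" "W 1 3 + W 2 4 \<le> W 1 4 + W 2 3"
  shows "Min {W (\<sigma> 1) (\<sigma> 2) + W (\<sigma> 3) (\<sigma> 4) | \<sigma>. \<sigma> permutes {1..4}} = W 1 3 + W 2 4"
    (is "Min ?S = _")
proof (rule Min_eqI)
  have "?S = (\<lambda>\<sigma>. W (\<sigma> 1) (\<sigma> 2) + W (\<sigma> 3) (\<sigma> 4)) ` {\<sigma>. \<sigma> permutes {1..4}}"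
    by auto
  then show "finite ?S"
    by (simp add: finite_permutations)
  show "W 1 3 + W 2 4 \<le> s" if "s \<in> ?S" for s
  proof -
    obtain \<sigma> where \<sigma>: "\<sigma> permutes {1..4}" and s: "s = W (\<sigma> 1) (\<sigma> 2) + W (\<sigma> 3) (\<sigma> 4)"
      using \<open>s \<in> ?S\<close> by blast
    show ?thesis
      using pairing_sum_cases[of W, OF sym \<sigma>] assms unfolding s by auto
  qed
  have "Transposition.transpose 2 3 permutes {1..4::nat}"
    by (rule permutes_swap_id) auto
  then show "W 1 3 + W 2 4 \<in> ?S"
    by force
qed

theorem mainTheorem19:
  fixes f :: "real \<Rightarrow> real" and g :: "real \<Rightarrow> ereal" and x :: "nat \<Rightarrow> real"
  assumes f_convex: "convex_on {0..} f"
    and f_noninc: "\<And>s t. 0 \<le> s \<Longrightarrow> s \<le> t \<Longrightarrow> f t \<le> f s"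
    and g_vals: "\<And>t. 0 \<le> t \<Longrightarrow> g t \<noteq> -\<infinity>"
    and g_convex: "ext_convex_on {0..} g"
    and g_noninc: "\<And>s t. 0 \<le> s \<Longrightarrow> s \<le> t \<Longrightarrow> g t \<le> g s"
    and x_nonneg: "0 \<le> x 1"
    and x_ord: "x 1 \<le> x 2" "x 2 \<le> x 3" "x 3 \<le> x 4"
  shows "wfun f g (x 1) (x 3) + wfun f g (x 2) (x 4) =
         Min {wfun f g (x (\<sigma> 1)) (x (\<sigma> 2)) + wfun f g (x (\<sigma> 3)) (x (\<sigma> 4)) | \<sigma>.
              \<sigma> permutes {1..4}}"
proof -
  let ?w = "\<lambda>i j. wfun f g (x i) (x j)" and ?d = "\<lambda>i j. graph_dist f (x i) (x j)"
  have d_nonneg: "0 \<le> ?d i j" for i j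
    by (simp add: graph_dist_def)
  have chords: "?d 1 2 \<le> ?d 1 3" "?d 3 4 \<le> ?d 2 4" "?d 2 3 \<le> ?d 1 3" "?d 1 3 \<le> ?d 1 4"
    by (rule graph_dist_mono[OF f_noninc]; use x_nonneg x_ord in linarith)+
  have quadrangle: "?d 1 4 + ?d 2 3 \<le> ?d 1 3 + ?d 2 4"
    using graph_dist_quadrangle[OF f_convex f_noninc x_nonneg x_ord] .
  have "?w 1 3 + ?w 2 4 \<le> ?w 1 2 + ?w 3 4"
    unfolding wfun_eq_graph_dist using g_noninc chords d_nonneg by (intro add_mono) simp_all
  moreover have "?w 1 3 + ?w 2 4 \<le> ?w 1 4 + ?w 2 3"
    unfolding wfun_eq_graph_dist add.commute[of "g (?d 1 4)"]
    by (rule antimono_ext_convex_on_add_le[OF g_vals g_convex g_noninc])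
      (use d_nonneg[of 2 3] chords quadrangle in linarith)+
  ultimately show ?thesis
    using Min_pairings_eq[of ?w, OF wfun_commute] by simp
qed

end
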